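(* Let $f:\mathbb{R}^d\to\mathbb{R}$ be twice differentiable, $m$-strongly convex and $L$-smooth ($0<m\le L$), with unique minimizer $x_\star$. Let $(\mathcal{G}_k)_{k\ge 0}$ be a filtration and, for each $k\ge 0$, let $\varepsilon_{k+1}(\cdot)$ be a $\mathcal{G}_{k+1}$-measurable random field on $\mathbb{R}^d$ with values in $\mathbb{R}^d$ such that $\mathbb{E}[\varepsilon_{k+1}(\zeta)\mid\mathcal{G}_k]=0$ for every $\zeta$, the fields $\{\varepsilon_k\}_{k>0}$ being independent and identically distributed. Let $a_k>0$ and $A_k=\sum_{i=1}^k a_i$. For $k\ge1$ set $\phi_k(x)=\sum_{i=1}^k\frac{a_i m}{2}\|x-x_i\|^2$, so that its convex conjugate satisfies $\nabla\phi_k^\star(z)=\dfrac{z+m\sum_{i=1}^k a_ix_i}{A_km}$. Let $(x_k,y_k,z_k)_{k\ge1}$ be iterates of the implicit accelerated dual averaging method, i.e. (with $x_k$ $\mathcal{G}_k$-measurable) for all $k\ge1$, $$x_k=\frac{A_{k-1}}{A_k}y_{k-1}+\frac{a_k}{A_k}\nabla\phi_k^\star(z_{k-1}),\quad \omega_k=\nabla f(x_k)+\varepsilon_{k+1}(x_k),\quad z_k=z_{k-1}-a_k\omega_k,\quad y_k=\frac{A_{k-1}}{A_k}y_{k-1}+\frac{a_k}{A_k}\nabla\phi_k^\star(z_k).$$ Define $U_k=f(y_k)$, $$L_k=\frac{1}{A_k}\Big[\sum_{i=1}^k a_i\big(f(x_i)-\varepsilon_{i+1}(x_i)^\top(x_\star-x_i)\big)+\min_x\sum_{i=1}^k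 a_i\Big(\omega_i^\top(x-x_i)+\frac m2\|x-x_i\|^2\Big)\Big],$$ and $G_k=U_k-L_k$. Writing $\gamma_k=a_k/A_k$, for every $k\ge2$, $$\mathbb{E}[G_k]\le(1-\gamma_k)\mathbb{E}[G_{k-1}]-m_k\,\mathbb{E}\|\nabla f(x_k)\|^2+n_k\,\mathbb{E}\|\varepsilon_{k+1}(x_k)\|^2,$$ where $m_k=\Big(\frac m2-\frac{\gamma_k^2L}{2}\Big)\frac{\gamma_k^2}{m^2}$ and $n_k=\frac{\gamma_k^2}{m}-\Big(\frac m2-\frac{\gamma_k^2L}{2}\Big)\frac{\gamma_k^2}{m^2}$.
   Context: $\|\cdot\|$ is the Euclidean norm. A function is $m$-strongly convex and $L$-smooth if $f(x)+\nabla f(x)^\top(y-x)+\frac m2\|y-x\|^2\le f(y)\le f(x)+\nabla f(x)^\top(y-x)+\frac L2\|y-x\|^2$ for all $x,y$. The convex conjugate is $\psi^\star(z)=\max_x\{z^\top x-\psi(x)\}$. The paper phrases this result as: with $m_0=0$ the method has the "property of robustness" $\mathbb{E}[\mathcal{E}_{k+1}]\le(1-r_k)\mathbb{E}[\mathcal{E}_k]-m_k\mathbb{E}\|\nabla f(\zeta_k)\|^2+n_k\mathbb{E}\|\varepsilon_{k+1}(\zeta_k)\|^2$ with $\mathcal{E}_k=G_k$, $r_k=a_k/A_k$. *)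

theory Defs
  imports "HOL-Analysis.Analysis" "HOL-Probability.Probability"
begin

definition cumw :: "(nat \<Rightarrow> real) \<Rightarrow> nat \<Rightarrow> real" where
  "cumw a k = (\<Sum>i=1..k. a i)"

definition phi :: "real \<Rightarrow> (nat \<Rightarrow> real) \<Rightarrow> (nat \<Rightarrow> 'v::real_inner) \<Rightarrow> nat \<Rightarrow> 'v \<Rightarrow> real" where
  "phi m a xs k x = (\<Sum>i=1..k. a i * m / 2 * (norm (x - xs i))\<^sup>2)"

text \<open>The gradient of the convex conjugate of phi_k, by the explicit formula stated in
  the paper: (z + m sum_{i=1}^k a_i x_i) / (A_k m).\<close>
definition phi_conj_grad :: "real \<Rightarrow> (nat \<Rightarrow> real) \<Rightarrow> (nat \<Rightarrow> 'v::real_vector) \<Rightarrow> nat \<Rightarrow> 'v \<Rightarrow> 'v" where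
  "phi_conj_grad m a xs k z = (1 / (cumw a k * m)) *\<^sub>R (z + m *\<^sub>R (\<Sum>i=1..k. a i *\<^sub>R xs i))"

definition strongly_convex_smooth ::
  "real \<Rightarrow> real \<Rightarrow> ('v::real_inner \<Rightarrow> real) \<Rightarrow> ('v \<Rightarrow> 'v) \<Rightarrow> bool" where
  "strongly_convex_smooth m L f df \<longleftrightarrow>
     (\<forall>x y. f x + df x \<bullet> (y - x) + m / 2 * (norm (y - x))\<^sup>2 \<le> f y \<and>
            f y \<le> f x + df x \<bullet> (y - x) + L / 2 * (norm (y - x))\<^sup>2)"

end

(*
  Pointwise in the sample, the gap satisfies
    G_k <= (1 - \<gamma>_k) G_{k-1} - m_k |grad f(x_k)|^2 + n_k |\<epsilon>_{k+1}(x_k)|^2 + \<epsilon>_{k+1}(x_k)^T H_k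
  for a G_k-measurable vector H_k.  Since z_k = - sum_i a_i \<omega>_i (the implicit equation for x_1
  forces z_0 = 0), the quadratic model inside L_k is minimised exactly at grad phi_k^*(z_k), so L_k
  obeys an exact recursion in k.  U_k = f(y_k) is bounded above by L-smoothness, because
  y_k = x_k - (\<gamma>_k^2 / m) \<omega>_k, and f(y_{k-1}) below by convexity, because y_{k-1} - x_k is
  proportional to grad phi_{k-1}^*(z_{k-1}) - x_k; after expanding all squared norms what is left
  over is the nonnegative slack (m/2) \<gamma>_k (1 - \<gamma>_k) |grad phi_{k-1}^*(z_{k-1}) - x_k|^2.
  In expectation the cross term vanishes as E[\<epsilon>_{k+1}(x_k) | G_k] = 0.
*)
theory Submission
  imports Defs
begin

lemma cumw_Suc: "cumw a (Suc j) = cumw a j + a (Suc j)"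
  by (simp add: cumw_def)

lemma cumw_pos:
  assumes "\<And>i. 1 \<le> i \<Longrightarrow> 0 < a i" and "1 \<le> j"
  shows "0 < cumw a j"
  unfolding cumw_def using assms by (intro sum_pos) auto

lemma phi_conj_grad_diff:
  "phi_conj_grad m a x j z1 - phi_conj_grad m a x j z2 = (1 / (cumw a j * m)) *\<^sub>R (z1 - z2)"
  by (simp add: phi_conj_grad_def algebra_simps)

definition quad_model ::
  "real \<Rightarrow> ('i \<Rightarrow> real) \<Rightarrow> ('i \<Rightarrow> 'v::real_inner) \<Rightarrow> ('i \<Rightarrow> 'v) \<Rightarrow> 'i set \<Rightarrow> 'v \<Rightarrow> real" where
  "quad_model m a x w I u = (\<Sum>i\<in>I. a i * (w i \<bullet> (u - x i) + m / 2 * (norm (u - x i))\<^sup>2))"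

definition quad_model_argmin ::
  "real \<Rightarrow> ('i \<Rightarrow> real) \<Rightarrow> ('i \<Rightarrow> 'v::real_vector) \<Rightarrow> ('i \<Rightarrow> 'v) \<Rightarrow> 'i set \<Rightarrow> 'v" where
  "quad_model_argmin m a x w I =
     (1 / (sum a I * m)) *\<^sub>R (m *\<^sub>R (\<Sum>i\<in>I. a i *\<^sub>R x i) - (\<Sum>i\<in>I. a i *\<^sub>R w i))"

lemma quad_model_split:
  fixes x w :: "'i \<Rightarrow> 'v::real_inner"
  assumes A: "sum a I \<noteq> 0" and m: "m \<noteq> 0"
  defines "v \<equiv> quad_model_argmin m a x w I"
  shows "quad_model m a x w I u = quad_model m a x w I v + m * sum a I / 2 * (norm (u - v))\<^sup>2"
proof -
  have term_split: "a i * (w i \<bullet> (u - x i) + m / 2 * (norm (u - x i))\<^sup>2)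
      = a i * (w i \<bullet> (v - x i) + m / 2 * (norm (v - x i))\<^sup>2)
        + (u - v) \<bullet> (a i *\<^sub>R w i + (a i * m) *\<^sub>R (v - x i)) + a i * m / 2 * (norm (u - v))\<^sup>2" for i
  proof -
    have norm_split: "(norm (u - x i))\<^sup>2
        = (norm (u - v))\<^sup>2 + 2 * ((u - v) \<bullet> (v - x i)) + (norm (v - x i))\<^sup>2"
      unfolding power2_norm_eq_inner
      by (simp add: inner_diff_left inner_diff_right inner_commute algebra_simps)
    have inner_split: "w i \<bullet> (u - x i) = w i \<bullet> (v - x i) + (u - v) \<bullet> w i"
      by (simp add: inner_diff_right inner_commute)
    show ?thesis
      unfolding norm_split inner_split inner_add_right inner_scaleR_right
      by (simp add: algebra_simps del: inner_diff_left inner_diff_right)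
  qed
  have stationary: "(\<Sum>i\<in>I. a i *\<^sub>R w i + (a i * m) *\<^sub>R (v - x i)) = 0"
  proof -
    have "(sum a I * m) *\<^sub>R v = m *\<^sub>R (\<Sum>i\<in>I. a i *\<^sub>R x i) - (\<Sum>i\<in>I. a i *\<^sub>R w i)"
      unfolding v_def quad_model_argmin_def using A m by simp
    moreover have "(sum a I * m) *\<^sub>R v = (\<Sum>i\<in>I. (a i * m) *\<^sub>R v)"
      by (simp add: scaleR_sum_left sum_distrib_right)
    moreover have "m *\<^sub>R (\<Sum>i\<in>I. a i *\<^sub>R x i) = (\<Sum>i\<in>I. (a i * m) *\<^sub>R x i)"
      by (simp add: scaleR_sum_right mult.commute)
    ultimately show ?thesis
      by (simp add: sum.distrib scaleR_diff_right sum_subtractf)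
  qed
  have "quad_model m a x w I u = quad_model m a x w I v
      + (u - v) \<bullet> (\<Sum>i\<in>I. a i *\<^sub>R w i + (a i * m) *\<^sub>R (v - x i)) + (\<Sum>i\<in>I. a i * m / 2 * (norm (u - v))\<^sup>2)"
    unfolding quad_model_def term_split sum.distrib inner_sum_right[symmetric] by simp
  also have "(\<Sum>i\<in>I. a i * m / 2 * (norm (u - v))\<^sup>2) = m * sum a I / 2 * (norm (u - v))\<^sup>2"
    by (simp add: sum_distrib_right[symmetric] sum_divide_distrib[symmetric]
        sum_distrib_left[symmetric] algebra_simps)
  finally show ?thesis unfolding stationary by simp
qed

lemma quad_model_Inf:
  assumes "0 < sum a I" and "0 < m"
  shows "(INF u. quad_model m a x w I u) = quad_model m a x w I (quad_model_argmin m a x w I)"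
proof (rule cInf_eq_minimum)
  fix r assume "r \<in> range (quad_model m a x w I)"
  then obtain u where "r = quad_model m a x w I u" by blast
  then show "quad_model m a x w I (quad_model_argmin m a x w I) \<le> r"
    using quad_model_split[of a I m x w u] assms by simp
qed simp

text \<open>The lower estimate L_j of the paper, with w i = \<omega>_i and e i = \<epsilon>_{i+1}(x_i).\<close>
definition lower_estimate ::
  "real \<Rightarrow> (nat \<Rightarrow> real) \<Rightarrow> ('v::real_inner \<Rightarrow> real) \<Rightarrow> 'v \<Rightarrow> (nat \<Rightarrow> 'v) \<Rightarrow> (nat \<Rightarrow> 'v) \<Rightarrow> (nat \<Rightarrow> 'v)
    \<Rightarrow> nat \<Rightarrow> real" where
  "lower_estimate m a f xs x w e j =
     (1 / cumw a j) * ((\<Sum>i=1..j. a i * (f (x i) - e i \<bullet> (xs - x i)))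
                      + (INF u. quad_model m a x w {1..j} u))"

lemma lower_estimate_eq:
  assumes "\<And>i. 1 \<le> i \<Longrightarrow> 0 < a i" and "1 \<le> j" and "0 < m"
  shows "lower_estimate m a f xs x w e j =
     ((\<Sum>i=1..j. a i * (f (x i) - e i \<bullet> (xs - x i)))
      + quad_model m a x w {1..j} (quad_model_argmin m a x w {1..j})) / cumw a j"
  using quad_model_Inf[of a "{1..j}" m x w] cumw_pos[of a j] assms
  unfolding lower_estimate_def cumw_def by simp

lemma strongly_convex_smooth_upper:
  "strongly_convex_smooth m L f df \<Longrightarrow> f q \<le> f p + df p \<bullet> (q - p) + L / 2 * (norm (q - p))\<^sup>2"
  unfolding strongly_convex_smooth_def by blast

lemma strongly_convex_smooth_lower:
  assumes "strongly_convex_smooth m L f df" and "0 \<le> m"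
  shows "f p + df p \<bullet> (q - p) \<le> f q"
proof -
  have "f p + df p \<bullet> (q - p) + m / 2 * (norm (q - p))\<^sup>2 \<le> f q"
    using assms(1) unfolding strongly_convex_smooth_def by blast
  moreover have "0 \<le> m / 2 * (norm (q - p))\<^sup>2"
    using assms(2) by simp
  ultimately show ?thesis
    by linarith
qed

lemma strongly_convex_smooth_grad_bound:
  fixes f :: "'v::real_inner \<Rightarrow> real"
  assumes sc: "strongly_convex_smooth m L f df" and xmin: "\<And>u. f xs \<le> f u" and L: "0 < L"
  shows "norm (df u) \<le> L * norm (u - xs)"
proof -
  note smooth = strongly_convex_smooth_upper[OF sc]
  have descent: "f xs \<le> f p - (norm (df p))\<^sup>2 / (2 * L)" for p
  proof -
    have "f xs \<le> f (p - (1 / L) *\<^sub>R df p)" by (rule xmin)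
    also have "\<dots> \<le> f p + df p \<bullet> (- (1 / L) *\<^sub>R df p) + L / 2 * (norm (- (1 / L) *\<^sub>R df p))\<^sup>2"
      using smooth[where p = p and q = "p - (1 / L) *\<^sub>R df p"] by simp
    also have "\<dots> = f p - (norm (df p))\<^sup>2 / (2 * L)"
      using L by (simp add: power2_norm_eq_inner[symmetric] power_mult_distrib power2_eq_square
          field_simps)
    finally show ?thesis .
  qed
  have "df xs = 0"
    using descent[of xs] L by (smt (verit) divide_pos_pos zero_less_norm_iff zero_less_power)
  then have "f u \<le> f xs + L / 2 * (norm (u - xs))\<^sup>2"
    using smooth[where p = xs and q = u] by simp
  with descent[of u] have "(norm (df u))\<^sup>2 / (2 * L) \<le> L / 2 * (norm (u - xs))\<^sup>2"
    by linarith
  then have "(norm (df u))\<^sup>2 \<le> (L * norm (u - xs))\<^sup>2"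
    using L by (simp add: field_simps power_mult_distrib power2_eq_square)
  then show ?thesis
    using L by (simp add: power2_le_iff_abs_le)
qed

lemma gap_recursion_algebra:
  fixes g e d s :: "'v::real_inner" and \<gamma> m L fx fy fy' P0 P1 S0 S1 :: real
  assumes m: "0 < m" and \<gamma>: "0 \<le> \<gamma>" "\<gamma> \<le> 1"
    and smooth: "fy' \<le> fx + g \<bullet> (- (\<gamma>\<^sup>2 / m) *\<^sub>R (g + e)) + L / 2 * (norm (- (\<gamma>\<^sup>2 / m) *\<^sub>R (g + e)))\<^sup>2"
    and convex: "fx + g \<bullet> (- \<gamma> *\<^sub>R d) \<le> fy"
    and P: "P1 = (1 - \<gamma>) * P0 + (1 - \<gamma>) * (m / 2) * (norm (- \<gamma> *\<^sub>R d - (\<gamma> / m) *\<^sub>R (g + e)))\<^sup>2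
              + \<gamma> * ((g + e) \<bullet> ((1 - \<gamma>) *\<^sub>R d - (\<gamma> / m) *\<^sub>R (g + e))
                     + m / 2 * (norm ((1 - \<gamma>) *\<^sub>R d - (\<gamma> / m) *\<^sub>R (g + e)))\<^sup>2)"
    and S: "S1 = (1 - \<gamma>) * S0 + \<gamma> * (fx - e \<bullet> s)"
  shows "fy' - (S1 + P1) \<le> (1 - \<gamma>) * (fy - (S0 + P0))
           - (m / 2 - \<gamma>\<^sup>2 * L / 2) * \<gamma>\<^sup>2 / m\<^sup>2 * (norm g)\<^sup>2
           + (\<gamma>\<^sup>2 / m - (m / 2 - \<gamma>\<^sup>2 * L / 2) * \<gamma>\<^sup>2 / m\<^sup>2) * (norm e)\<^sup>2
           + e \<bullet> (\<gamma> *\<^sub>R s - (\<gamma> * (1 - \<gamma>)) *\<^sub>R d + (L * \<gamma> ^ 4 / m\<^sup>2) *\<^sub>R g)"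
proof -
  define gg ge ee gd ed dd es
    where "gg = g \<bullet> g" and "ge = g \<bullet> e" and "ee = e \<bullet> e" and "gd = g \<bullet> d" and "ed = e \<bullet> d"
      and "dd = d \<bullet> d" and "es = e \<bullet> s"
  note gram = gg_def ge_def ee_def gd_def ed_def dd_def es_def
  have n1: "(norm (- (\<gamma>\<^sup>2 / m) *\<^sub>R (g + e)))\<^sup>2 = (\<gamma>\<^sup>2 / m)\<^sup>2 * (gg + 2 * ge + ee)"
    unfolding power2_norm_eq_inner gram
    by (simp add: inner_add_left inner_add_right inner_commute power2_eq_square algebra_simps
        add_divide_distrib)
  have n2: "(norm (- \<gamma> *\<^sub>R d - (\<gamma> / m) *\<^sub>R (g + e)))\<^sup>2
      = \<gamma>\<^sup>2 * dd + 2 * \<gamma> * (\<gamma> / m) * (gd + ed) + (\<gamma> / m)\<^sup>2 * (gg + 2 * ge + ee)"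
    unfolding power2_norm_eq_inner gram
    by (simp add: inner_add_left inner_add_right inner_diff_left inner_diff_right inner_commute
        power2_eq_square algebra_simps add_divide_distrib)
  have n3: "(norm ((1 - \<gamma>) *\<^sub>R d - (\<gamma> / m) *\<^sub>R (g + e)))\<^sup>2
      = (1 - \<gamma>)\<^sup>2 * dd - 2 * (1 - \<gamma>) * (\<gamma> / m) * (gd + ed) + (\<gamma> / m)\<^sup>2 * (gg + 2 * ge + ee)"
    unfolding power2_norm_eq_inner gram
    by (simp add: inner_add_left inner_add_right inner_diff_left inner_diff_right inner_commute
        power2_eq_square algebra_simps add_divide_distrib)
  have i1: "(g + e) \<bullet> ((1 - \<gamma>) *\<^sub>R d - (\<gamma> / m) *\<^sub>R (g + e))
      = (1 - \<gamma>) * (gd + ed) - (\<gamma> / m) * (gg + 2 * ge + ee)"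
    unfolding gram
    by (simp add: inner_add_left inner_add_right inner_diff_left inner_diff_right inner_commute
        algebra_simps)
  have i2: "g \<bullet> (- (\<gamma>\<^sup>2 / m) *\<^sub>R (g + e)) = - (\<gamma>\<^sup>2 / m) * (gg + ge)"
    unfolding gram by (simp add: inner_add_right algebra_simps add_divide_distrib)
  have i3: "g \<bullet> (- \<gamma> *\<^sub>R d) = - \<gamma> * gd"
    unfolding gram by simp
  have i4: "e \<bullet> (\<gamma> *\<^sub>R s - (\<gamma> * (1 - \<gamma>)) *\<^sub>R d + (L * \<gamma> ^ 4 / m\<^sup>2) *\<^sub>R g)
      = \<gamma> * es - \<gamma> * (1 - \<gamma>) * ed + (L * \<gamma> ^ 4 / m\<^sup>2) * ge"
    unfolding gram by (simp add: inner_add_right inner_diff_right inner_commute)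
  have norms: "(norm g)\<^sup>2 = gg" "(norm e)\<^sup>2 = ee" "(norm d)\<^sup>2 = dd"
    unfolding gram by (simp_all add: power2_norm_eq_inner)
  text \<open>Up to the two inequalities, the claim is an identity in the Gram entries, with
    slack (m/2) \<gamma> (1 - \<gamma>) |d|^2.\<close>
  have identity: "fx + g \<bullet> (- (\<gamma>\<^sup>2 / m) *\<^sub>R (g + e)) + L / 2 * (norm (- (\<gamma>\<^sup>2 / m) *\<^sub>R (g + e)))\<^sup>2
        - (S1 + P1)
      = (1 - \<gamma>) * (fx + g \<bullet> (- \<gamma> *\<^sub>R d) - (S0 + P0))
        - (m / 2 - \<gamma>\<^sup>2 * L / 2) * \<gamma>\<^sup>2 / m\<^sup>2 * (norm g)\<^sup>2
        + (\<gamma>\<^sup>2 / m - (m / 2 - \<gamma>\<^sup>2 * L / 2) * \<gamma>\<^sup>2 / m\<^sup>2) * (norm e)\<^sup>2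
        + e \<bullet> (\<gamma> *\<^sub>R s - (\<gamma> * (1 - \<gamma>)) *\<^sub>R d + (L * \<gamma> ^ 4 / m\<^sup>2) *\<^sub>R g)
        - m / 2 * \<gamma> * (1 - \<gamma>) * (norm d)\<^sup>2"
    unfolding P S n1 n2 n3 i1 i2 i3 i4 norms es_def[symmetric]
    using m by (simp add: field_simps power2_eq_square eval_nat_numeral)
  have "(1 - \<gamma>) * (fx + g \<bullet> (- \<gamma> *\<^sub>R d) - (S0 + P0)) \<le> (1 - \<gamma>) * (fy - (S0 + P0))"
    using convex \<gamma> by (intro mult_left_mono) auto
  moreover have "0 \<le> m / 2 * \<gamma> * (1 - \<gamma>) * (norm d)\<^sup>2"
    using m \<gamma> by simp
  ultimately show ?thesis
    using identity smooth by linarith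
qed

locale implicit_dual_averaging =
  fixes m :: real and a :: "nat \<Rightarrow> real" and x y z w :: "nat \<Rightarrow> 'v::real_inner"
  assumes m_pos: "0 < m"
    and a_pos: "\<And>j. 1 \<le> j \<Longrightarrow> 0 < a j"
    and x_rec: "\<And>j. 1 \<le> j \<Longrightarrow>
      x j = (cumw a (j - 1) / cumw a j) *\<^sub>R y (j - 1) + (a j / cumw a j) *\<^sub>R phi_conj_grad m a x j (z (j - 1))"
    and z_rec: "\<And>j. 1 \<le> j \<Longrightarrow> z j = z (j - 1) - a j *\<^sub>R w j"
    and y_rec: "\<And>j. 1 \<le> j \<Longrightarrow>
      y j = (cumw a (j - 1) / cumw a j) *\<^sub>R y (j - 1) + (a j / cumw a j) *\<^sub>R phi_conj_grad m a x j (z j)"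
begin

abbreviation dual_point :: "nat \<Rightarrow> 'v" where
  "dual_point j \<equiv> phi_conj_grad m a x j (z j)"

lemma step_weight:
  assumes "1 \<le> j"
  shows "1 - a (Suc j) / cumw a (Suc j) = cumw a j / cumw a (Suc j)"
    and "0 < a (Suc j) / cumw a (Suc j)" and "a (Suc j) / cumw a (Suc j) < 1"
  using cumw_pos[of a, OF a_pos assms] a_pos[of "Suc j"] unfolding cumw_Suc
  by (simp_all add: field_simps)

text \<open>The implicit equation for x_1 reads x_1 = x_1 + z_0 / (a_1 m).\<close>
lemma z_0: "z 0 = 0"
proof -
  have "x 1 = (1 / (a 1 * m)) *\<^sub>R z 0 + x 1"
    using x_rec[of 1] a_pos[of 1] m_pos by (simp add: cumw_def phi_conj_grad_def scaleR_add_right)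
  then show ?thesis
    using a_pos[of 1] m_pos by simp
qed

lemma z_eq_sum: "z j = - (\<Sum>i=1..j. a i *\<^sub>R w i)"
proof (induction j)
  case (Suc j)
  then show ?case using z_rec[of "Suc j"] by simp
qed (simp add: z_0)

lemma dual_point_eq_argmin: "dual_point j = quad_model_argmin m a x w {1..j}"
  by (simp add: phi_conj_grad_def quad_model_argmin_def z_eq_sum cumw_def algebra_simps)

lemma lower_estimate_dual_point:
  assumes "1 \<le> j"
  shows "lower_estimate m a f xs x w e j
    = (\<Sum>i=1..j. a i * (f (x i) - e i \<bullet> (xs - x i))) / cumw a j
      + quad_model m a x w {1..j} (dual_point j) / cumw a j"
  using lower_estimate_eq[OF a_pos assms m_pos] unfolding dual_point_eq_argmin
  by (simp add: add_divide_distrib)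

lemma y_minus_x:
  assumes "1 \<le> j"
  shows "y j - x j = - ((a j / cumw a j)\<^sup>2 / m) *\<^sub>R w j"
proof -
  have "y j - x j = (a j / cumw a j) *\<^sub>R (dual_point j - phi_conj_grad m a x j (z (j - 1)))"
    using x_rec[OF assms] y_rec[OF assms] by (simp add: algebra_simps)
  also have "\<dots> = (a j / cumw a j) *\<^sub>R ((1 / (cumw a j * m)) *\<^sub>R (- a j *\<^sub>R w j))"
    unfolding phi_conj_grad_diff using z_rec[OF assms] by simp
  finally show ?thesis
    by (simp add: power2_eq_square)
qed

lemma conj_grad_prev:
  assumes "1 \<le> j"
  shows "phi_conj_grad m a x (Suc j) (z j)
    = (cumw a j / cumw a (Suc j)) *\<^sub>R dual_point j + (a (Suc j) / cumw a (Suc j)) *\<^sub>R x (Suc j)"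
proof -
  have "(cumw a j / cumw a (Suc j)) *\<^sub>R dual_point j
      = (1 / (cumw a (Suc j) * m)) *\<^sub>R (z j + m *\<^sub>R (\<Sum>i=1..j. a i *\<^sub>R x i))"
    using cumw_pos[of a, OF a_pos assms] m_pos by (simp add: phi_conj_grad_def)
  then show ?thesis
    using cumw_pos[of a, OF a_pos, of "Suc j"] m_pos
    by (simp add: phi_conj_grad_def scaleR_add_right)
qed

lemma dual_point_Suc:
  assumes "1 \<le> j" and \<gamma>: "\<gamma> = a (Suc j) / cumw a (Suc j)"
  shows "dual_point (Suc j) = (1 - \<gamma>) *\<^sub>R dual_point j + \<gamma> *\<^sub>R x (Suc j) - (\<gamma> / m) *\<^sub>R w (Suc j)"
proof -
  have "dual_point (Suc j) - phi_conj_grad m a x (Suc j) (z j)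
      = (1 / (cumw a (Suc j) * m)) *\<^sub>R (z (Suc j) - z j)"
    by (rule phi_conj_grad_diff)
  also have "z (Suc j) - z j = - a (Suc j) *\<^sub>R w (Suc j)"
    using z_rec[of "Suc j"] by simp
  finally show ?thesis
    unfolding conj_grad_prev[OF assms(1)] step_weight(1)[OF assms(1), symmetric] \<gamma>
    by (simp add: algebra_simps)
qed

text \<open>x_{j+1} is a convex combination of y_j and dual_point j, so their offsets from x_{j+1}
  are proportional.\<close>
lemma y_prev_minus_x:
  assumes "1 \<le> j" and \<gamma>: "\<gamma> = a (Suc j) / cumw a (Suc j)"
  shows "y j - x (Suc j) = - \<gamma> *\<^sub>R (dual_point j - x (Suc j))"
proof -
  have "x (Suc j) = (1 - \<gamma>) *\<^sub>R y j + \<gamma> *\<^sub>R ((1 - \<gamma>) *\<^sub>R dual_point j + \<gamma> *\<^sub>R x (Suc j))"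
    using x_rec[of "Suc j", simplified] conj_grad_prev[OF assms(1)]
    unfolding step_weight(1)[OF assms(1), symmetric] \<gamma>[symmetric] by simp
  then have "(1 - \<gamma>) *\<^sub>R (y j - x (Suc j) + \<gamma> *\<^sub>R (dual_point j - x (Suc j))) = 0"
    by (simp add: algebra_simps)
  moreover have "\<gamma> < 1"
    using step_weight(3)[OF assms(1)] unfolding \<gamma> .
  ultimately have "y j - x (Suc j) + \<gamma> *\<^sub>R (dual_point j - x (Suc j)) = 0"
    by simp
  then show ?thesis
    by (simp add: eq_neg_iff_add_eq_0)
qed

lemma quad_model_step:
  assumes j: "1 \<le> j" and \<gamma>: "\<gamma> = a (Suc j) / cumw a (Suc j)"
  shows "quad_model m a x w {1..Suc j} (dual_point (Suc j)) / cumw a (Suc j)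
    = (1 - \<gamma>) * (quad_model m a x w {1..j} (dual_point j) / cumw a j)
      + (1 - \<gamma>) * (m / 2) * (norm (dual_point (Suc j) - dual_point j))\<^sup>2
      + \<gamma> * (w (Suc j) \<bullet> (dual_point (Suc j) - x (Suc j))
              + m / 2 * (norm (dual_point (Suc j) - x (Suc j)))\<^sup>2)"
proof -
  define u where "u = dual_point (Suc j)"
  have A: "0 < cumw a j" "0 < cumw a (Suc j)"
    using cumw_pos[of a, OF a_pos] j by auto
  have "quad_model m a x w {1..Suc j} u = quad_model m a x w {1..j} u
      + a (Suc j) * (w (Suc j) \<bullet> (u - x (Suc j)) + m / 2 * (norm (u - x (Suc j)))\<^sup>2)"
    by (simp add: quad_model_def)
  also have "quad_model m a x w {1..j} u
      = quad_model m a x w {1..j} (dual_point j) + m * cumw a j / 2 * (norm (u - dual_point j))\<^sup>2"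
    using quad_model_split[of a "{1..j}" m x w u] A m_pos unfolding dual_point_eq_argmin cumw_def
    by simp
  finally show ?thesis
    unfolding step_weight(1)[OF j, folded \<gamma>] unfolding \<gamma> u_def[symmetric] using A
    by (simp add: field_simps)
qed

lemma gap_step:
  assumes sc: "strongly_convex_smooth m L f df" and w: "\<And>i. w i = df (x i) + e i"
    and j: "1 \<le> j" and \<gamma>: "\<gamma> = a (Suc j) / cumw a (Suc j)"
  shows "f (y (Suc j)) - lower_estimate m a f xs x w e (Suc j)
    \<le> (1 - \<gamma>) * (f (y j) - lower_estimate m a f xs x w e j)
      - (m / 2 - \<gamma>\<^sup>2 * L / 2) * \<gamma>\<^sup>2 / m\<^sup>2 * (norm (df (x (Suc j))))\<^sup>2
      + (\<gamma>\<^sup>2 / m - (m / 2 - \<gamma>\<^sup>2 * L / 2) * \<gamma>\<^sup>2 / m\<^sup>2) * (norm (e (Suc j)))\<^sup>2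
      + e (Suc j) \<bullet> (\<gamma> *\<^sub>R (xs - x (Suc j)) + (1 - \<gamma>) *\<^sub>R (y j - x (Suc j))
                      + (L * \<gamma> ^ 4 / m\<^sup>2) *\<^sub>R df (x (Suc j)))"
proof -
  define x' g e' d where "x' = x (Suc j)" and "g = df x'" and "e' = e (Suc j)"
    and "d = dual_point j - x'"
  have \<gamma>_bounds: "0 \<le> \<gamma>" "\<gamma> \<le> 1"
    using step_weight(2,3)[OF j] unfolding \<gamma> by auto
  have w': "w (Suc j) = g + e'"
    unfolding w g_def e'_def x'_def ..
  have y_next: "y (Suc j) - x' = - (\<gamma>\<^sup>2 / m) *\<^sub>R (g + e')"
    using y_minus_x[of "Suc j"] unfolding w' x'_def \<gamma> by simp
  have y_prev: "y j - x' = - \<gamma> *\<^sub>R d"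
    using y_prev_minus_x[OF j \<gamma>] unfolding d_def x'_def .
  have "dual_point (Suc j) - dual_point j = - \<gamma> *\<^sub>R d - (\<gamma> / m) *\<^sub>R (g + e')"
    and "dual_point (Suc j) - x' = (1 - \<gamma>) *\<^sub>R d - (\<gamma> / m) *\<^sub>R (g + e')"
    unfolding dual_point_Suc[OF j \<gamma>] d_def w' x'_def by (simp_all add: algebra_simps)
  then have model: "quad_model m a x w {1..Suc j} (dual_point (Suc j)) / cumw a (Suc j)
    = (1 - \<gamma>) * (quad_model m a x w {1..j} (dual_point j) / cumw a j)
      + (1 - \<gamma>) * (m / 2) * (norm (- \<gamma> *\<^sub>R d - (\<gamma> / m) *\<^sub>R (g + e')))\<^sup>2
      + \<gamma> * ((g + e') \<bullet> ((1 - \<gamma>) *\<^sub>R d - (\<gamma> / m) *\<^sub>R (g + e'))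
              + m / 2 * (norm ((1 - \<gamma>) *\<^sub>R d - (\<gamma> / m) *\<^sub>R (g + e')))\<^sup>2)"
    using quad_model_step[OF j \<gamma>] unfolding w' x'_def by simp
  have sums: "(\<Sum>i=1..Suc j. a i * (f (x i) - e i \<bullet> (xs - x i))) / cumw a (Suc j)
    = (1 - \<gamma>) * ((\<Sum>i=1..j. a i * (f (x i) - e i \<bullet> (xs - x i))) / cumw a j)
      + \<gamma> * (f x' - e' \<bullet> (xs - x'))"
    unfolding step_weight(1)[OF j, folded \<gamma>] unfolding \<gamma> x'_def e'_def
    using cumw_pos[of a, OF a_pos j] cumw_pos[of a, OF a_pos, of "Suc j"] by (simp add: field_simps)
  have smooth: "f (y (Suc j)) \<le> f x' + g \<bullet> (- (\<gamma>\<^sup>2 / m) *\<^sub>R (g + e'))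
                                + L / 2 * (norm (- (\<gamma>\<^sup>2 / m) *\<^sub>R (g + e')))\<^sup>2"
    using strongly_convex_smooth_upper[OF sc, of "y (Suc j)" x'] unfolding y_next g_def .
  have convex: "f x' + g \<bullet> (- \<gamma> *\<^sub>R d) \<le> f (y j)"
    using strongly_convex_smooth_lower[OF sc, of x' "y j"] m_pos unfolding y_prev g_def by simp
  have noise: "\<gamma> *\<^sub>R (xs - x') + (1 - \<gamma>) *\<^sub>R (y j - x') + (L * \<gamma> ^ 4 / m\<^sup>2) *\<^sub>R g
      = \<gamma> *\<^sub>R (xs - x') - (\<gamma> * (1 - \<gamma>)) *\<^sub>R d + (L * \<gamma> ^ 4 / m\<^sup>2) *\<^sub>R g"
    unfolding y_prev by (simp add: algebra_simps)
  show ?thesis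
    unfolding lower_estimate_dual_point[OF j] lower_estimate_dual_point[OF le_SucI[OF j]]
      x'_def[symmetric] g_def[symmetric] e'_def[symmetric] noise
    by (rule gap_recursion_algebra[OF m_pos \<gamma>_bounds smooth convex model sums])
qed

end

definition square_integrable ::
  "'a measure \<Rightarrow> ('a \<Rightarrow> 'v::{real_normed_vector, second_countable_topology}) \<Rightarrow> bool" where
  "square_integrable M g \<longleftrightarrow> g \<in> borel_measurable M \<and> integrable M (\<lambda>\<omega>. (norm (g \<omega>))\<^sup>2)"

lemma square_integrable_borel_measurable: "square_integrable M g \<Longrightarrow> g \<in> borel_measurable M"
  by (simp add: square_integrable_def)

lemma square_integrable_integrable_norm_square:
  "square_integrable M g \<Longrightarrow> integrable M (\<lambda>\<omega>. (norm (g \<omega>))\<^sup>2)"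
  by (simp add: square_integrable_def)

lemma (in finite_measure) square_integrable_const: "square_integrable M (\<lambda>\<omega>. c)"
  by (simp add: square_integrable_def)

lemma square_integrable_scaleR:
  "square_integrable M g \<Longrightarrow> square_integrable M (\<lambda>\<omega>. c *\<^sub>R g \<omega>)"
  by (simp add: square_integrable_def power_mult_distrib borel_measurable_scaleR)

lemma square_integrable_bound:
  fixes g :: "'a \<Rightarrow> 'v::{real_normed_vector, second_countable_topology}"
    and h :: "'a \<Rightarrow> 'u::{real_normed_vector, second_countable_topology}"
  assumes g: "square_integrable M g" and h: "h \<in> borel_measurable M"
    and bound: "\<And>\<omega>. \<omega> \<in> space M \<Longrightarrow> norm (h \<omega>) \<le> c * norm (g \<omega>)"
  shows "square_integrable M h"
  unfolding square_integrable_def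
proof
  show "integrable M (\<lambda>\<omega>. (norm (h \<omega>))\<^sup>2)"
  proof (rule Bochner_Integration.integrable_bound)
    show "integrable M (\<lambda>\<omega>. c\<^sup>2 * (norm (g \<omega>))\<^sup>2)"
      using g by (simp add: square_integrable_def)
    show "AE \<omega> in M. norm ((norm (h \<omega>))\<^sup>2) \<le> norm (c\<^sup>2 * (norm (g \<omega>))\<^sup>2)"
    proof (rule AE_I2)
      fix \<omega> assume "\<omega> \<in> space M"
      then have "(norm (h \<omega>))\<^sup>2 \<le> (c * norm (g \<omega>))\<^sup>2"
        using bound by (simp add: power_mono)
      then show "norm ((norm (h \<omega>))\<^sup>2) \<le> norm (c\<^sup>2 * (norm (g \<omega>))\<^sup>2)"
        by (simp add: power_mult_distrib)
    qed
    show "(\<lambda>\<omega>. (norm (h \<omega>))\<^sup>2) \<in> borel_measurable M"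
      using h by measurable
  qed
qed (rule h)

lemma square_integrable_add:
  fixes g h :: "'a \<Rightarrow> 'v::{real_normed_vector, second_countable_topology}"
  assumes g: "square_integrable M g" and h: "square_integrable M h"
  shows "square_integrable M (\<lambda>\<omega>. g \<omega> + h \<omega>)"
  unfolding square_integrable_def
proof
  have [measurable]: "g \<in> borel_measurable M" "h \<in> borel_measurable M"
    using g h by (simp_all add: square_integrable_def)
  show gh: "(\<lambda>\<omega>. g \<omega> + h \<omega>) \<in> borel_measurable M"
    by measurable
  show "integrable M (\<lambda>\<omega>. (norm (g \<omega> + h \<omega>))\<^sup>2)"
  proof (rule Bochner_Integration.integrable_bound)
    show "integrable M (\<lambda>\<omega>. 2 * (norm (g \<omega>))\<^sup>2 + 2 * (norm (h \<omega>))\<^sup>2)"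
      using g h by (simp add: square_integrable_def)
    show "(\<lambda>\<omega>. (norm (g \<omega> + h \<omega>))\<^sup>2) \<in> borel_measurable M"
      using gh by measurable
    show "AE \<omega> in M. norm ((norm (g \<omega> + h \<omega>))\<^sup>2) \<le> norm (2 * (norm (g \<omega>))\<^sup>2 + 2 * (norm (h \<omega>))\<^sup>2)"
    proof (rule AE_I2)
      fix \<omega>
      have "(norm (g \<omega> + h \<omega>))\<^sup>2 \<le> (norm (g \<omega>) + norm (h \<omega>))\<^sup>2"
        by (simp add: norm_triangle_ineq power_mono)
      also have "\<dots> \<le> 2 * (norm (g \<omega>))\<^sup>2 + 2 * (norm (h \<omega>))\<^sup>2"
        using sum_squares_bound[of "norm (g \<omega>)" "norm (h \<omega>)"] by (simp add: power2_sum)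
      finally show "norm ((norm (g \<omega> + h \<omega>))\<^sup>2) \<le> norm (2 * (norm (g \<omega>))\<^sup>2 + 2 * (norm (h \<omega>))\<^sup>2)"
        by simp
    qed
  qed
qed

lemma square_integrable_diff:
  "square_integrable M g \<Longrightarrow> square_integrable M h \<Longrightarrow> square_integrable M (\<lambda>\<omega>. g \<omega> - h \<omega>)"
  using square_integrable_add[of M g "\<lambda>\<omega>. (- 1) *\<^sub>R h \<omega>"] square_integrable_scaleR[of M h "- 1"]
  by simp

lemma (in finite_measure) square_integrable_sum:
  "(\<And>i. i \<in> I \<Longrightarrow> square_integrable M (g i)) \<Longrightarrow> square_integrable M (\<lambda>\<omega>. \<Sum>i\<in>I. g i \<omega>)"
proof (induction I rule: infinite_finite_induct)
  case (insert i I)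
  then show ?case by (simp add: square_integrable_add)
qed (simp_all add: square_integrable_const)

lemma borel_measurable_vec_component:
  "g \<in> borel_measurable M \<Longrightarrow> (\<lambda>\<omega>. g \<omega> $ i) \<in> borel_measurable M"
  by (intro borel_measurable_continuous_on[where f = "\<lambda>v. v $ i"] continuous_on_component
      continuous_on_id)

lemma square_integrable_component:
  fixes g :: "'a \<Rightarrow> real^'n"
  assumes "square_integrable M g"
  shows "square_integrable M (\<lambda>\<omega>. g \<omega> $ i)"
proof (rule square_integrable_bound[OF assms, where c = 1])
  show "(\<lambda>\<omega>. g \<omega> $ i) \<in> borel_measurable M"
    using assms unfolding square_integrable_def by (simp add: borel_measurable_vec_component)
qed (simp add: component_le_norm_cart)

lemma integrable_inner_square_integrable:
  fixes g h :: "'a \<Rightarrow> 'v::{real_inner, second_countable_topology}"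
  assumes g: "square_integrable M g" and h: "square_integrable M h"
  shows "integrable M (\<lambda>\<omega>. g \<omega> \<bullet> h \<omega>)"
proof (rule Bochner_Integration.integrable_bound)
  show "integrable M (\<lambda>\<omega>. (norm (g \<omega>))\<^sup>2 + (norm (h \<omega>))\<^sup>2)"
    using g h by (simp add: square_integrable_def)
  show "(\<lambda>\<omega>. g \<omega> \<bullet> h \<omega>) \<in> borel_measurable M"
    using g h by (simp add: square_integrable_def borel_measurable_inner)
  show "AE \<omega> in M. norm (g \<omega> \<bullet> h \<omega>) \<le> norm ((norm (g \<omega>))\<^sup>2 + (norm (h \<omega>))\<^sup>2)"
  proof (rule AE_I2)
    fix \<omega>
    have "\<bar>g \<omega> \<bullet> h \<omega>\<bar> \<le> norm (g \<omega>) * norm (h \<omega>)"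
      by (rule Cauchy_Schwarz_ineq2)
    also have "\<dots> \<le> (norm (g \<omega>))\<^sup>2 + (norm (h \<omega>))\<^sup>2"
      using sum_squares_bound[of "norm (g \<omega>)" "norm (h \<omega>)"]
        mult_nonneg_nonneg[OF norm_ge_zero norm_ge_zero, of "g \<omega>" "h \<omega>"] by linarith
    finally show "norm (g \<omega> \<bullet> h \<omega>) \<le> norm ((norm (g \<omega>))\<^sup>2 + (norm (h \<omega>))\<^sup>2)"
      by simp
  qed
qed

lemma (in finite_measure) integrable_if_square_integrable:
  fixes g :: "'a \<Rightarrow> 'v::{banach, second_countable_topology}"
  assumes "square_integrable M g"
  shows "integrable M g"
proof (rule integrable_norm_cancel)
  show g: "g \<in> borel_measurable M"
    using assms by (rule square_integrable_borel_measurable)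
  show "integrable M (\<lambda>\<omega>. norm (g \<omega>))"
    using g square_integrable_integrable_norm_square[OF assms]
    by (auto intro: square_integrable_imp_integrable[of "\<lambda>\<omega>. norm (g \<omega>)"])
qed

lemma (in finite_measure) integrable_quadratically_bounded:
  fixes f :: "'v::{real_inner, second_countable_topology} \<Rightarrow> real"
  assumes f: "continuous_on UNIV f" and lower: "\<And>u. b \<le> f u"
    and upper: "\<And>u. f u \<le> c + q \<bullet> (u - p) + C * (norm (u - p))\<^sup>2"
    and X: "square_integrable M X"
  shows "integrable M (\<lambda>\<omega>. f (X \<omega>))"
proof (rule Bochner_Integration.integrable_bound)
  have Xp: "square_integrable M (\<lambda>\<omega>. X \<omega> - p)"
    by (rule square_integrable_diff[OF X square_integrable_const])
  show "integrable M (\<lambda>\<omega>. \<bar>b\<bar> + \<bar>c\<bar> + \<bar>q \<bullet> (X \<omega> - p)\<bar> + \<bar>C\<bar> * (norm (X \<omega> - p))\<^sup>2)"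
    using integrable_inner_square_integrable[OF square_integrable_const Xp, of q]
      square_integrable_integrable_norm_square[OF Xp]
    by (intro Bochner_Integration.integrable_add integrable_abs integrable_mult_right) auto
  show "(\<lambda>\<omega>. f (X \<omega>)) \<in> borel_measurable M"
    using borel_measurable_continuous_on[OF f square_integrable_borel_measurable[OF X]] .
  show "AE \<omega> in M. norm (f (X \<omega>)) \<le> norm (\<bar>b\<bar> + \<bar>c\<bar> + \<bar>q \<bullet> (X \<omega> - p)\<bar> + \<bar>C\<bar> * (norm (X \<omega> - p))\<^sup>2)"
  proof (rule AE_I2)
    fix \<omega>
    define r where "r = \<bar>b\<bar> + \<bar>c\<bar> + \<bar>q \<bullet> (X \<omega> - p)\<bar> + \<bar>C\<bar> * (norm (X \<omega> - p))\<^sup>2"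
    have "C * (norm (X \<omega> - p))\<^sup>2 \<le> \<bar>C\<bar> * (norm (X \<omega> - p))\<^sup>2" "0 \<le> \<bar>C\<bar> * (norm (X \<omega> - p))\<^sup>2"
      by (simp_all add: mult_right_mono)
    then have "f (X \<omega>) \<le> r" "- f (X \<omega>) \<le> r"
      using lower[of "X \<omega>"] upper[of "X \<omega>"] abs_ge_self[of c] abs_ge_minus_self[of b]
        abs_ge_self[of "q \<bullet> (X \<omega> - p)"] abs_ge_zero[of b] abs_ge_zero[of c]
        abs_ge_zero[of "q \<bullet> (X \<omega> - p)"]
      unfolding r_def by linarith+
    then have "\<bar>f (X \<omega>)\<bar> \<le> r"
      by (simp only: abs_le_iff)
    then show "norm (f (X \<omega>)) \<le> norm r"
      unfolding real_norm_def using abs_ge_self order_trans by blast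
  qed
qed

lemma (in sigma_finite_subalgebra) integral_inner_eq_0_if_cond_exp_eq_0:
  fixes e H :: "'a \<Rightarrow> real^'n"
  assumes e: "square_integrable M e" and H: "square_integrable M H" "H \<in> borel_measurable F"
    and cond_mean: "\<And>i. AE \<omega> in M. real_cond_exp M F (\<lambda>\<omega>. e \<omega> $ i) \<omega> = 0"
  shows "(\<integral>\<omega>. e \<omega> \<bullet> H \<omega> \<partial>M) = 0"
proof -
  have component: "(\<integral>\<omega>. e \<omega> $ i * H \<omega> $ i \<partial>M) = 0" for i
  proof -
    have Hi: "(\<lambda>\<omega>. H \<omega> $ i) \<in> borel_measurable F"
      using H(2) by (rule borel_measurable_vec_component)
    have ei: "(\<lambda>\<omega>. e \<omega> $ i) \<in> borel_measurable M"
      using square_integrable_borel_measurable[OF square_integrable_component[OF e]] .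
    have "(\<integral>\<omega>. H \<omega> $ i * e \<omega> $ i \<partial>M)
        = (\<integral>\<omega>. H \<omega> $ i * real_cond_exp M F (\<lambda>\<omega>. e \<omega> $ i) \<omega> \<partial>M)"
      using integrable_inner_square_integrable[OF square_integrable_component[OF H(1)]
          square_integrable_component[OF e]]
      by (intro real_cond_exp_intg(2)[symmetric] Hi ei) simp
    also have "\<dots> = (\<integral>\<omega>. 0 \<partial>M)"
    proof (rule integral_cong_AE)
      show "(\<lambda>\<omega>. H \<omega> $ i * real_cond_exp M F (\<lambda>\<omega>. e \<omega> $ i) \<omega>) \<in> borel_measurable M"
        using measurable_from_subalg[OF subalg Hi] borel_measurable_cond_exp2
        by (intro borel_measurable_times) auto
      show "AE \<omega> in M. H \<omega> $ i * real_cond_exp M F (\<lambda>\<omega>. e \<omega> $ i) \<omega> = 0"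
        using cond_mean[of i] by eventually_elim simp
    qed simp
    finally show ?thesis
      by (simp add: mult.commute)
  qed
  have "(\<integral>\<omega>. e \<omega> \<bullet> H \<omega> \<partial>M) = (\<integral>\<omega>. (\<Sum>i\<in>UNIV. e \<omega> $ i * H \<omega> $ i) \<partial>M)"
    unfolding inner_vec_def by simp
  also have "\<dots> = (\<Sum>i\<in>UNIV. (\<integral>\<omega>. e \<omega> $ i * H \<omega> $ i \<partial>M))"
    using integrable_inner_square_integrable[OF square_integrable_component[OF e]
        square_integrable_component[OF H(1)]]
    by (intro Bochner_Integration.integral_sum) simp
  finally show ?thesis
    using component by simp
qed

locale stochastic_dual_averaging = prob_space M
  for M :: "'a measure" +
  fixes F :: "nat \<Rightarrow> 'a measure"
    and f :: "real^'d \<Rightarrow> real" and df :: "real^'d \<Rightarrow> real^'d"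
    and m L :: real and xs :: "real^'d"
    and eps :: "nat \<Rightarrow> 'a \<Rightarrow> real^'d \<Rightarrow> real^'d"
    and a :: "nat \<Rightarrow> real" and x y z :: "nat \<Rightarrow> 'a \<Rightarrow> real^'d"
  assumes filt: "filtration (space M) F"
    and sub: "\<And>j. subalgebra M (F j)"
    and f_cont: "continuous_on UNIV f" and df_cont: "continuous_on UNIV df"
    and m_pos: "0 < m" and m_le_L: "m \<le> L"
    and sc: "strongly_convex_smooth m L f df"
    and xmin: "\<And>u. f xs \<le> f u"
    and eps_meas: "\<And>j. (\<lambda>(\<omega>, \<zeta>). eps (Suc j) \<omega> \<zeta>) \<in> borel_measurable (F (Suc j) \<Otimes>\<^sub>M borel)"
    and eps_mean0: "\<And>j \<zeta> i. \<zeta> \<in> borel_measurable (F j) \<Longrightarrow>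
      integrable M (\<lambda>\<omega>. eps (Suc j) \<omega> (\<zeta> \<omega>)) \<Longrightarrow>
      AE \<omega> in M. real_cond_exp M (F j) (\<lambda>\<omega>. eps (Suc j) \<omega> (\<zeta> \<omega>) $ i) \<omega> = 0"
    and a_pos: "\<And>j. 1 \<le> j \<Longrightarrow> 0 < a j"
    and x_meas: "\<And>j. 1 \<le> j \<Longrightarrow> x j \<in> borel_measurable (F j)"
    and x_rec: "\<And>j \<omega>. 1 \<le> j \<Longrightarrow> \<omega> \<in> space M \<Longrightarrow>
      x j \<omega> = (cumw a (j - 1) / cumw a j) *\<^sub>R y (j - 1) \<omega>
             + (a j / cumw a j) *\<^sub>R phi_conj_grad m a (\<lambda>i. x i \<omega>) j (z (j - 1) \<omega>)"
    and z_rec: "\<And>j \<omega>. 1 \<le> j \<Longrightarrow> \<omega> \<in> space M \<Longrightarrow>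
      z j \<omega> = z (j - 1) \<omega> - a j *\<^sub>R (df (x j \<omega>) + eps (Suc j) \<omega> (x j \<omega>))"
    and y_rec: "\<And>j \<omega>. 1 \<le> j \<Longrightarrow> \<omega> \<in> space M \<Longrightarrow>
      y j \<omega> = (cumw a (j - 1) / cumw a j) *\<^sub>R y (j - 1) \<omega>
             + (a j / cumw a j) *\<^sub>R phi_conj_grad m a (\<lambda>i. x i \<omega>) j (z j \<omega>)"
    and x_L2: "\<And>j. 1 \<le> j \<Longrightarrow> integrable M (\<lambda>\<omega>. (norm (x j \<omega>))\<^sup>2)"
    and y_L2: "\<And>j. 1 \<le> j \<Longrightarrow> integrable M (\<lambda>\<omega>. (norm (y j \<omega>))\<^sup>2)"
    and noise_L2: "\<And>j. 1 \<le> j \<Longrightarrow> integrable M (\<lambda>\<omega>. (norm (eps (Suc j) \<omega> (x j \<omega>)))\<^sup>2)"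
begin

abbreviation noise :: "nat \<Rightarrow> 'a \<Rightarrow> real^'d" where
  "noise j \<omega> \<equiv> eps (Suc j) \<omega> (x j \<omega>)"

abbreviation grad_estimate :: "nat \<Rightarrow> 'a \<Rightarrow> real^'d" where
  "grad_estimate j \<omega> \<equiv> df (x j \<omega>) + noise j \<omega>"

abbreviation gap :: "nat \<Rightarrow> 'a \<Rightarrow> real" where
  "gap j \<omega> \<equiv> f (y j \<omega>)
     - lower_estimate m a f xs (\<lambda>i. x i \<omega>) (\<lambda>i. grad_estimate i \<omega>) (\<lambda>i. noise i \<omega>) j"

lemma implicit_dual_averaging_at:
  assumes "\<omega> \<in> space M"
  shows "implicit_dual_averaging m a (\<lambda>i. x i \<omega>) (\<lambda>i. y i \<omega>) (\<lambda>i. z i \<omega>) (\<lambda>i. grad_estimate i \<omega>)"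
  by unfold_locales (use assms m_pos a_pos x_rec z_rec y_rec in auto)

lemma x_measurable_later:
  assumes "1 \<le> i" and "i \<le> j"
  shows "x i \<in> borel_measurable (F j)"
proof (rule measurable_from_subalg[OF _ x_meas[OF assms(1)]])
  show "subalgebra (F j) (F i)"
    unfolding subalgebra_def
    using filtration.space_F[OF filt] filtration.sets_F_mono[OF filt assms(2)] by auto
qed

lemma borel_measurable_from_F: "g \<in> borel_measurable (F j) \<Longrightarrow> g \<in> borel_measurable M"
  by (rule measurable_from_subalg[OF sub])

lemma noise_measurable:
  assumes "1 \<le> i"
  shows "noise i \<in> borel_measurable (F (Suc i))"
proof -
  have "(\<lambda>\<omega>. (\<omega>, x i \<omega>)) \<in> measurable (F (Suc i)) (F (Suc i) \<Otimes>\<^sub>M borel)"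
    using x_measurable_later[OF assms] by (intro measurable_Pair measurable_ident_sets) auto
  from measurable_compose[OF this eps_meas[of i]] show ?thesis
    by simp
qed

lemma grad_measurable:
  assumes "1 \<le> i" and "i \<le> j"
  shows "(\<lambda>\<omega>. df (x i \<omega>)) \<in> borel_measurable (F j)"
  by (rule borel_measurable_continuous_on[OF df_cont x_measurable_later[OF assms]])

lemma y_gradient_step:
  assumes "1 \<le> j" and "\<omega> \<in> space M"
  shows "y j \<omega> = x j \<omega> - ((a j / cumw a j)\<^sup>2 / m) *\<^sub>R grad_estimate j \<omega>"
  using implicit_dual_averaging.y_minus_x[OF implicit_dual_averaging_at[OF assms(2)] assms(1)]
  by (simp add: algebra_simps)

lemma y_measurable:
  assumes "1 \<le> j"
  shows "y j \<in> borel_measurable (F (Suc j))"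
proof -
  have "(\<lambda>\<omega>. x j \<omega> - ((a j / cumw a j)\<^sup>2 / m) *\<^sub>R grad_estimate j \<omega>) \<in> borel_measurable (F (Suc j))"
    using assms x_measurable_later[of j "Suc j"] grad_measurable[of j "Suc j"]
      noise_measurable[of j]
    by (intro borel_measurable_diff borel_measurable_scaleR borel_measurable_add
        borel_measurable_const) auto
  moreover have "space (F (Suc j)) = space M"
    using sub unfolding subalgebra_def by simp
  ultimately show ?thesis
    using y_gradient_step[OF assms] by (subst measurable_cong) auto
qed

lemma square_integrable_x: "1 \<le> i \<Longrightarrow> square_integrable M (x i)"
  using borel_measurable_from_F[OF x_meas] x_L2 by (simp add: square_integrable_def)

lemma square_integrable_noise: "1 \<le> i \<Longrightarrow> square_integrable M (noise i)"
  using borel_measurable_from_F[OF noise_measurable] noise_L2 by (simp add: square_integrable_def)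

lemma square_integrable_grad:
  assumes "1 \<le> i"
  shows "square_integrable M (\<lambda>\<omega>. df (x i \<omega>))"
proof (rule square_integrable_bound[where c = L])
  show "square_integrable M (\<lambda>\<omega>. x i \<omega> - xs)"
    by (rule square_integrable_diff[OF square_integrable_x[OF assms] square_integrable_const])
  show "(\<lambda>\<omega>. df (x i \<omega>)) \<in> borel_measurable M"
    by (rule borel_measurable_from_F[OF grad_measurable[OF assms order_refl]])
  show "norm (df (x i \<omega>)) \<le> L * norm (x i \<omega> - xs)" for \<omega>
    using strongly_convex_smooth_grad_bound[OF sc xmin] m_pos m_le_L by simp
qed

lemma square_integrable_grad_estimate: "1 \<le> i \<Longrightarrow> square_integrable M (grad_estimate i)"
  using square_integrable_add[OF square_integrable_grad square_integrable_noise] .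

lemma square_integrable_y: "1 \<le> j \<Longrightarrow> square_integrable M (y j)"
  using borel_measurable_from_F[OF y_measurable] y_L2 by (simp add: square_integrable_def)

lemma square_integrable_argmin:
  "square_integrable M (\<lambda>\<omega>. quad_model_argmin m a (\<lambda>i. x i \<omega>) (\<lambda>i. grad_estimate i \<omega>) {1..j})"
  unfolding quad_model_argmin_def
  by (intro square_integrable_scaleR square_integrable_diff square_integrable_sum
      square_integrable_x square_integrable_grad_estimate) auto

lemma integrable_f: "square_integrable M X \<Longrightarrow> integrable M (\<lambda>\<omega>. f (X \<omega>))"
  by (rule integrable_quadratically_bounded[OF f_cont xmin strongly_convex_smooth_upper[OF sc]])

lemma integrable_gap:
  assumes j: "1 \<le> j"
  shows "integrable M (gap j)"
proof -
  define v where "v \<omega> = quad_model_argmin m a (\<lambda>i. x i \<omega>) (\<lambda>i. grad_estimate i \<omega>) {1..j}" for \<omega>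
  have v: "square_integrable M v"
    unfolding v_def by (rule square_integrable_argmin)
  have gap_eq: "gap j = (\<lambda>\<omega>. f (y j \<omega>) - ((\<Sum>i=1..j. a i * (f (x i \<omega>) - noise i \<omega> \<bullet> (xs - x i \<omega>)))
      + quad_model m a (\<lambda>i. x i \<omega>) (\<lambda>i. grad_estimate i \<omega>) {1..j} (v \<omega>)) / cumw a j)"
    by (intro ext) (simp only: lower_estimate_eq[OF a_pos j m_pos] v_def)
  have "integrable M (\<lambda>\<omega>. f (y j \<omega>) - ((\<Sum>i=1..j. a i * (f (x i \<omega>) - noise i \<omega> \<bullet> (xs - x i \<omega>)))
      + quad_model m a (\<lambda>i. x i \<omega>) (\<lambda>i. grad_estimate i \<omega>) {1..j} (v \<omega>)) / cumw a j)"
    unfolding quad_model_def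
    using j integrable_f[OF square_integrable_y]
      integrable_f[OF square_integrable_x]
      integrable_inner_square_integrable[OF square_integrable_noise
        square_integrable_diff[OF square_integrable_const square_integrable_x]]
      integrable_inner_square_integrable[OF square_integrable_grad_estimate
        square_integrable_diff[OF v square_integrable_x]]
      square_integrable_integrable_norm_square[OF square_integrable_diff[OF v square_integrable_x]]
    by (intro Bochner_Integration.integrable_diff Bochner_Integration.integrable_add
        integrable_divide_zero Bochner_Integration.integrable_sum integrable_mult_right) auto
  then show ?thesis
    unfolding gap_eq .
qed

lemma expected_gap_step:
  assumes j: "1 \<le> j" and \<gamma>: "\<gamma> = a (Suc j) / cumw a (Suc j)"
  shows "(\<integral>\<omega>. gap (Suc j) \<omega> \<partial>M)
    \<le> (1 - \<gamma>) * (\<integral>\<omega>. gap j \<omega> \<partial>M)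
      - (m / 2 - \<gamma>\<^sup>2 * L / 2) * \<gamma>\<^sup>2 / m\<^sup>2 * (\<integral>\<omega>. (norm (df (x (Suc j) \<omega>)))\<^sup>2 \<partial>M)
      + (\<gamma>\<^sup>2 / m - (m / 2 - \<gamma>\<^sup>2 * L / 2) * \<gamma>\<^sup>2 / m\<^sup>2) * (\<integral>\<omega>. (norm (noise (Suc j) \<omega>))\<^sup>2 \<partial>M)"
proof -
  define mk nk where "mk = (m / 2 - \<gamma>\<^sup>2 * L / 2) * \<gamma>\<^sup>2 / m\<^sup>2"
    and "nk = \<gamma>\<^sup>2 / m - (m / 2 - \<gamma>\<^sup>2 * L / 2) * \<gamma>\<^sup>2 / m\<^sup>2"
  define H where "H \<omega> = \<gamma> *\<^sub>R (xs - x (Suc j) \<omega>) + (1 - \<gamma>) *\<^sub>R (y j \<omega> - x (Suc j) \<omega>)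
    + (L * \<gamma> ^ 4 / m\<^sup>2) *\<^sub>R df (x (Suc j) \<omega>)" for \<omega>
  have j': "1 \<le> Suc j"
    by simp
  have pointwise: "gap (Suc j) \<omega> \<le> (1 - \<gamma>) * gap j \<omega> - mk * (norm (df (x (Suc j) \<omega>)))\<^sup>2
      + nk * (norm (noise (Suc j) \<omega>))\<^sup>2 + noise (Suc j) \<omega> \<bullet> H \<omega>" if "\<omega> \<in> space M" for \<omega>
    using implicit_dual_averaging.gap_step[OF implicit_dual_averaging_at[OF that] sc,
        where e = "\<lambda>i. noise i \<omega>" and xs = xs, OF _ j \<gamma>]
    unfolding mk_def nk_def H_def by simp
  have H_measurable: "H \<in> borel_measurable (F (Suc j))"
    unfolding H_def using j x_measurable_later[of "Suc j" "Suc j"] y_measurable[OF j]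
      grad_measurable[of "Suc j" "Suc j"]
    by (intro borel_measurable_add borel_measurable_diff borel_measurable_scaleR
        borel_measurable_const) auto
  have H_square_integrable: "square_integrable M H"
    unfolding H_def using j
    by (intro square_integrable_add square_integrable_diff square_integrable_scaleR
        square_integrable_const square_integrable_x square_integrable_y square_integrable_grad) auto
  have cross: "(\<integral>\<omega>. noise (Suc j) \<omega> \<bullet> H \<omega> \<partial>M) = 0"
  proof -
    interpret sigma_finite_subalgebra M "F (Suc j)"
      by (rule finite_measure_subalgebra_is_sigma_finite)
        (simp add: finite_measure_subalgebra_def finite_measure_subalgebra_axioms_def
          finite_measure_axioms sub)
    show ?thesis
      using eps_mean0[OF x_meas[OF j']
          integrable_if_square_integrable[OF square_integrable_noise[OF j']]]
      by (intro integral_inner_eq_0_if_cond_exp_eq_0 square_integrable_noise H_square_integrable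
          H_measurable) auto
  qed
  have integrable:
    "integrable M (gap j)" "integrable M (\<lambda>\<omega>. (norm (df (x (Suc j) \<omega>)))\<^sup>2)"
    "integrable M (\<lambda>\<omega>. (norm (noise (Suc j) \<omega>))\<^sup>2)" "integrable M (\<lambda>\<omega>. noise (Suc j) \<omega> \<bullet> H \<omega>)"
    using integrable_gap[OF j]
      square_integrable_integrable_norm_square[OF square_integrable_grad[OF j']]
      square_integrable_integrable_norm_square[OF square_integrable_noise[OF j']]
      integrable_inner_square_integrable[OF square_integrable_noise[OF j'] H_square_integrable]
    by auto
  have "(\<integral>\<omega>. gap (Suc j) \<omega> \<partial>M) \<le> (\<integral>\<omega>. (1 - \<gamma>) * gap j \<omega> - mk * (norm (df (x (Suc j) \<omega>)))\<^sup>2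
      + nk * (norm (noise (Suc j) \<omega>))\<^sup>2 + noise (Suc j) \<omega> \<bullet> H \<omega> \<partial>M)"
    using integrable_gap[OF j'] integrable pointwise
    by (intro integral_mono) auto
  also have "\<dots> = (1 - \<gamma>) * (\<integral>\<omega>. gap j \<omega> \<partial>M) - mk * (\<integral>\<omega>. (norm (df (x (Suc j) \<omega>)))\<^sup>2 \<partial>M)
      + nk * (\<integral>\<omega>. (norm (noise (Suc j) \<omega>))\<^sup>2 \<partial>M)"
    using integrable cross by simp
  finally show ?thesis
    unfolding mk_def nk_def .
qed

end

theorem theorem2:
  fixes M :: "'a measure"
    and F :: "nat \<Rightarrow> 'a measure"
    and f :: "real^'d \<Rightarrow> real"
    and df :: "real^'d \<Rightarrow> real^'d"
    and m L :: real
    and xs :: "real^'d"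
    and eps :: "nat \<Rightarrow> 'a \<Rightarrow> real^'d \<Rightarrow> real^'d"
    and a :: "nat \<Rightarrow> real"
    and x y z :: "nat \<Rightarrow> 'a \<Rightarrow> real^'d"
    and k :: nat
  assumes P: "prob_space M"
    and filt: "filtration (space M) F"
    and sub: "\<And>j. subalgebra M (F j)"
    \<comment> \<open>f twice differentiable with gradient df\<close>
    and grad: "\<And>u. (f has_derivative (\<lambda>h. df u \<bullet> h)) (at u)"
    and twice: "\<And>u. df differentiable (at u)"
    and mL: "0 < m" "m \<le> L"
    and sc: "strongly_convex_smooth m L f df"
    and xmin: "\<And>u. f xs \<le> f u"
    \<comment> \<open>noise: G_{j+1}-measurable random fields (jointly measurable in (omega, zeta))\<close>
    and eps_meas: "\<And>j. (\<lambda>(\<omega>, \<zeta>). eps (Suc j) \<omega> \<zeta>) \<in> borel_measurable (F (Suc j) \<Otimes>\<^sub>M borel)"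
    and eps_int: "\<And>j \<zeta>. integrable M (\<lambda>\<omega>. eps (Suc j) \<omega> \<zeta>)"
    \<comment> \<open>conditional mean zero, E[eps_{j+1}(zeta) | G_j] = 0, for every (G_j-measurable) zeta\<close>
    and eps_mean0: "\<And>j \<zeta> i. \<zeta> \<in> borel_measurable (F j) \<Longrightarrow>
         integrable M (\<lambda>\<omega>. eps (Suc j) \<omega> (\<zeta> \<omega>)) \<Longrightarrow>
         AE \<omega> in M. real_cond_exp M (F j) (\<lambda>\<omega>. eps (Suc j) \<omega> (\<zeta> \<omega>) $ i) \<omega> = 0"
    \<comment> \<open>the fields eps_j, j > 0, are independent and identically distributed\<close>
    and eps_indep: "prob_space.indep_vars M (\<lambda>_. \<Pi>\<^sub>M _\<in>UNIV. (borel :: (real^'d) measure)) eps {1..}"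
    and eps_ident: "\<And>j. j \<ge> 1 \<Longrightarrow>
         distr M (\<Pi>\<^sub>M _\<in>UNIV. (borel :: (real^'d) measure)) (eps j)
       = distr M (\<Pi>\<^sub>M _\<in>UNIV. (borel :: (real^'d) measure)) (eps 1)"
    \<comment> \<open>step sizes\<close>
    and a_pos: "\<And>j. j \<ge> 1 \<Longrightarrow> a j > 0"
    \<comment> \<open>implicit accelerated dual averaging iterates\<close>
    and x_meas: "\<And>j. j \<ge> 1 \<Longrightarrow> x j \<in> borel_measurable (F j)"
    and x_def: "\<And>j \<omega>. j \<ge> 1 \<Longrightarrow> \<omega> \<in> space M \<Longrightarrow>
         x j \<omega> = (cumw a (j - 1) / cumw a j) *\<^sub>R y (j - 1) \<omega>
                + (a j / cumw a j) *\<^sub>R phi_conj_grad m a (\<lambda>i. x i \<omega>) j (z (j - 1) \<omega>)"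
    and z_def: "\<And>j \<omega>. j \<ge> 1 \<Longrightarrow> \<omega> \<in> space M \<Longrightarrow>
         z j \<omega> = z (j - 1) \<omega> - a j *\<^sub>R (df (x j \<omega>) + eps (Suc j) \<omega> (x j \<omega>))"
    and y_def: "\<And>j \<omega>. j \<ge> 1 \<Longrightarrow> \<omega> \<in> space M \<Longrightarrow>
         y j \<omega> = (cumw a (j - 1) / cumw a j) *\<^sub>R y (j - 1) \<omega>
                + (a j / cumw a j) *\<^sub>R phi_conj_grad m a (\<lambda>i. x i \<omega>) j (z j \<omega>)"
    \<comment> \<open>existence of the expectations involved (finite second moments)\<close>
    and x_L2: "\<And>j. j \<ge> 1 \<Longrightarrow> integrable M (\<lambda>\<omega>. (norm (x j \<omega>))\<^sup>2)"
    and y_L2: "\<And>j. j \<ge> 1 \<Longrightarrow> integrable M (\<lambda>\<omega>. (norm (y j \<omega>))\<^sup>2)"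
    and z_L2: "\<And>j. j \<ge> 1 \<Longrightarrow> integrable M (\<lambda>\<omega>. (norm (z j \<omega>))\<^sup>2)"
    and epsx_L2: "\<And>j. j \<ge> 1 \<Longrightarrow> integrable M (\<lambda>\<omega>. (norm (eps (Suc j) \<omega> (x j \<omega>)))\<^sup>2)"
    and k2: "k \<ge> 2"
  shows
    "let A = cumw a;
         \<omega>v = (\<lambda>i \<omega>. df (x i \<omega>) + eps (Suc i) \<omega> (x i \<omega>));
         U = (\<lambda>j \<omega>. f (y j \<omega>));
         Lo = (\<lambda>j \<omega>. (1 / A j) *
                 ((\<Sum>i=1..j. a i * (f (x i \<omega>) - eps (Suc i) \<omega> (x i \<omega>) \<bullet> (xs - x i \<omega>)))
                  + (INF u. \<Sum>i=1..j. a i * (\<omega>v i \<omega> \<bullet> (u - x i \<omega>) + m / 2 * (norm (u - x i \<omega>))\<^sup>2))));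
         G = (\<lambda>j \<omega>. U j \<omega> - Lo j \<omega>);
         \<gamma> = a k / A k;
         mk = (m / 2 - \<gamma>\<^sup>2 * L / 2) * \<gamma>\<^sup>2 / m\<^sup>2;
         nk = \<gamma>\<^sup>2 / m - (m / 2 - \<gamma>\<^sup>2 * L / 2) * \<gamma>\<^sup>2 / m\<^sup>2
     in (\<integral>\<omega>. G k \<omega> \<partial>M)
        \<le> (1 - \<gamma>) * (\<integral>\<omega>. G (k - 1) \<omega> \<partial>M)
           - mk * (\<integral>\<omega>. (norm (df (x k \<omega>)))\<^sup>2 \<partial>M)
           + nk * (\<integral>\<omega>. (norm (eps (Suc k) \<omega> (x k \<omega>)))\<^sup>2 \<partial>M)"
proof -
  have f_cont: "continuous_on UNIV f"
    by (intro continuous_at_imp_continuous_on ballI has_derivative_continuous[OF grad])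
  have df_cont: "continuous_on UNIV df"
    by (intro continuous_at_imp_continuous_on ballI differentiable_imp_continuous_within twice)
  interpret stochastic_dual_averaging M F f df m L xs eps a x y z
    by (rule stochastic_dual_averaging.intro[OF P stochastic_dual_averaging_axioms.intro])
      (fact filt sub f_cont df_cont mL sc xmin eps_meas eps_mean0 a_pos x_meas x_def z_def y_def
        x_L2 y_L2 epsx_L2)+
  define j where "j = k - 1"
  have k: "k = Suc j" and j: "1 \<le> j"
    using k2 unfolding j_def by auto
  show ?thesis
    using expected_gap_step[OF j refl]
    unfolding Let_def k diff_Suc_1 lower_estimate_def quad_model_def .
qed

end
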